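(* Let $I=\ker\big(S\otimes_{\mathbf C}S\to\mathbf C[\mathcal M_{\ge0}]\otimes_{\mathbf C}S\big)$ be as in the context. Then $I$ is generated as an ideal of $S\otimes_{\mathbf C}S$ by \[ \{\,x^D\otimes x^E - x^E\otimes x^D \;\mid\; D,E\in\tilde M_{\ge0},\ [D]=[E]\,\}, \] and, if for each chamber $\Gamma$ of the arrangement $\mathcal A$ a set $\Xi_\Gamma$ of generators of the semigroup $M\cap\Gamma$ is chosen, also by \[ \{\,x^{D^+(m)}\otimes x^{D^-(m)} - x^{D^-(m)}\otimes x^{D^+(m)} \;\mid\; m\in\textstyle\bigcup_\Gamma\Xi_\Gamma\,\}, \] the union being over all chambers $\Gamma$.
   Context: Let $M=\mathbf Z^r$, $N=\mathrm{Hom}_{\mathbf Z}(M,\mathbf Z)$ with pairing $\langle\ ,\ \rangle$, and let $\Sigma$ be a finite complete fan in $N_{\mathbf R}$ (defining a complete toric variety $X$ over $\mathbf C$). Let $\rho_1,\dots,\rho_l$ be the one-dimensional cones of $\Sigma$ and $n_j\in N$ the primitive generator of $\rho_j$. Let $\tilde M$ be the free $\mathbf Z$-module with basis $\tilde m_1,\dots,\tilde m_l$, let $\pi^*:M\to\tilde M$, $\pi^*(m)=\sum_j\langle m,n_j\rangle\tilde m_j$, let $\mathcal M=\mathrm{coker}(\pi^* )$ and $\mu_j\in\mathcal M$ the image of $\tilde m_j$. Let $\tilde M_{\ge0}=\sum_j\mathbf Z_{\ge0}\tilde m_j$ and $\mathcal M_{\ge0}=\sum_j\mathbf Z_{\ge0}\mu_j$.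 Let $S=\mathbf C[x_1,\dots,x_l]$, graded by $\deg x_j=\mu_j$. For $D=\sum_j a_j\tilde m_j\in\tilde M_{\ge0}$ put $x^D=\prod_j x_j^{a_j}$ and $[D]=\sum_j a_j\mu_j$. For $m\in M$ put $D^+(m)=\sum_{\langle m,n_j\rangle>0}\langle m,n_j\rangle\tilde m_j$ and $D^-(m)=\sum_{\langle m,n_j\rangle<0}(-\langle m,n_j\rangle)\tilde m_j$. The $\mathbf C$-algebra homomorphism $S\otimes_{\mathbf C}S\to\mathbf C[\mathcal M_{\ge0}]\otimes_{\mathbf C}S$ is defined by $x^D\otimes x^E\mapsto\mathbf e([D])\otimes x^{D+E}$, where $\mathbf e(\alpha)$ denotes the basis element of the semigroup algebra $\mathbf C[\mathcal M_{\ge0}]$ corresponding to $\alpha$. Let $\mathcal A$ be the arrangement of hyperplanes $\{m\in\mathbf R^r:\langle m,n_j\rangle=0\}$, $j=1,\dots,l$; a chamber is a closed top-dimensional polyhedral cone of the partition of $\mathbf R^r$ induced by $\mathcal A$. *)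

theory Defs
  imports "HOL-Analysis.Analysis" "HOL-Library.Poly_Mapping" "HOL-Library.Product_Plus"
begin

text \<open>Lattices: M = N = int^'r (dual bases), the pairing is the standard dot product.\<close>

definition pairing :: "int^'r \<Rightarrow> int^'r \<Rightarrow> int" where
  "pairing m v = (\<Sum>i\<in>UNIV. m $ i * v $ i)"

definition rvec :: "int^'r \<Rightarrow> real^'r" where
  "rvec v = (\<chi> i. real_of_int (v $ i))"

definition rat_poly_cone :: "(real^'r) set \<Rightarrow> bool" where
  "rat_poly_cone \<sigma> \<longleftrightarrow> (\<exists>S :: (int^'r) set. finite S \<and> \<sigma> = convex_cone hull (insert 0 (rvec ` S)))"

definition strongly_convex :: "(real^'r) set \<Rightarrow> bool" where
  "strongly_convex \<sigma> \<longleftrightarrow> \<sigma> \<inter> uminus ` \<sigma> \<subseteq> {0}"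

definition is_fan :: "(real^'r) set set \<Rightarrow> bool" where
  "is_fan \<Sigma> \<longleftrightarrow> finite \<Sigma> \<and>
     (\<forall>\<sigma>\<in>\<Sigma>. rat_poly_cone \<sigma> \<and> strongly_convex \<sigma> \<and> (\<forall>\<tau>. \<tau> face_of \<sigma> \<and> \<tau> \<noteq> {} \<longrightarrow> \<tau> \<in> \<Sigma>)) \<and>
     (\<forall>\<sigma>\<in>\<Sigma>. \<forall>\<tau>\<in>\<Sigma>. (\<sigma> \<inter> \<tau>) face_of \<sigma> \<and> (\<sigma> \<inter> \<tau>) face_of \<tau>)"

definition complete_fan :: "(real^'r) set set \<Rightarrow> bool" where
  "complete_fan \<Sigma> \<longleftrightarrow> is_fan \<Sigma> \<and> \<Union>\<Sigma> = UNIV"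

definition rays :: "(real^'r) set set \<Rightarrow> (real^'r) set set" where
  "rays \<Sigma> = {\<sigma>\<in>\<Sigma>. aff_dim \<sigma> = 1}"

definition ray_of :: "int^'r \<Rightarrow> (real^'r) set" where
  "ray_of v = {c *\<^sub>R rvec v | c. c \<ge> 0}"

definition primitive :: "int^'r \<Rightarrow> bool" where
  "primitive v \<longleftrightarrow> v \<noteq> 0 \<and> (\<forall>(k::int) (w::int^'r). v = k *s w \<longrightarrow> \<bar>k\<bar> = 1)"

text \<open>The rays of \<Sigma> are indexed by the finite type 'j, with primitive generators n j.\<close>

definition ray_generators :: "(real^'r) set set \<Rightarrow> ('j::finite \<Rightarrow> int^'r) \<Rightarrow> bool" where
  "ray_generators \<Sigma> n \<longleftrightarrow> inj n \<and> (\<forall>j. primitive (n j)) \<and> rays \<Sigma> = range (\<lambda>j. ray_of (n j))"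

definition chamber :: "('j::finite \<Rightarrow> int^'r) \<Rightarrow> (real^'r) set \<Rightarrow> bool" where
  "chamber n \<Gamma> \<longleftrightarrow> (\<exists>C \<in> components (UNIV - (\<Union>j. {x. x \<bullet> rvec (n j) = 0})). \<Gamma> = closure C)"

definition semigroup_generators :: "(int^'r) set \<Rightarrow> (real^'r) set \<Rightarrow> bool" where
  "semigroup_generators \<Xi> \<Gamma> \<longleftrightarrow> \<Xi> \<subseteq> {m. rvec m \<in> \<Gamma>} \<and>
     (\<forall>m. rvec m \<in> \<Gamma> \<longrightarrow> (\<exists>F c. finite F \<and> F \<subseteq> \<Xi> \<and> m = (\<Sum>\<xi>\<in>F. int (c \<xi>) *s \<xi>)))"

text \<open>S \<otimes> S is the monoid algebra of N^l \<times> N^l; the monomial x^D \<otimes> x^E is the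
  basis element indexed by (D,E).\<close>

type_synonym 'j SS = "(('j \<Rightarrow>\<^sub>0 nat) \<times> ('j \<Rightarrow>\<^sub>0 nat)) \<Rightarrow>\<^sub>0 complex"

definition mono2 :: "('j \<Rightarrow>\<^sub>0 nat) \<Rightarrow> ('j \<Rightarrow>\<^sub>0 nat) \<Rightarrow> 'j SS" where
  "mono2 D E = Poly_Mapping.single (D, E) 1"

text \<open>The class [D] in the cokernel \<M> of \<pi>^*, represented as the coset D + im \<pi>^*.\<close>

definition deg_class :: "('j::finite \<Rightarrow> int^'r) \<Rightarrow> ('j \<Rightarrow>\<^sub>0 nat) \<Rightarrow> ('j \<Rightarrow> int) set" where
  "deg_class n D = {v. \<exists>m::int^'r. \<forall>j. v j - int (Poly_Mapping.lookup D j) = pairing m (n j)}"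

text \<open>The homomorphism S\<otimes>S \<rightarrow> C[\<M>_\<ge>0] \<otimes> S, x^D\<otimes>x^E \<mapsto> e([D]) \<otimes> x^(D+E),
  extended linearly; the target is the monoid algebra with basis pairs ([D], F).\<close>

definition phi :: "('j::finite \<Rightarrow> int^'r) \<Rightarrow> 'j SS \<Rightarrow> ((('j \<Rightarrow> int) set) \<times> ('j \<Rightarrow>\<^sub>0 nat)) \<Rightarrow>\<^sub>0 complex" where
  "phi n f = (\<Sum>k\<in>Poly_Mapping.keys f. Poly_Mapping.single (deg_class n (fst k), fst k + snd k) (Poly_Mapping.lookup f k))"

definition ideal_generated :: "'a::comm_ring_1 set \<Rightarrow> 'a set" where
  "ideal_generated G = {x. \<exists>F c. finite F \<and> F \<subseteq> G \<and> x = (\<Sum>g\<in>F. c g * g)}"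

definition Dplus :: "('j::finite \<Rightarrow> int^'r) \<Rightarrow> int^'r \<Rightarrow> ('j \<Rightarrow>\<^sub>0 nat)" where
  "Dplus n m = Abs_poly_mapping (\<lambda>j. nat (pairing m (n j)))"

definition Dminus :: "('j::finite \<Rightarrow> int^'r) \<Rightarrow> int^'r \<Rightarrow> ('j \<Rightarrow>\<^sub>0 nat)" where
  "Dminus n m = Abs_poly_mapping (\<lambda>j. nat (- pairing m (n j)))"

end

theory Submission
  imports Defs
begin

text \<open>
  The monomials \<open>x\<^sup>D \<otimes> x\<^sup>E\<close> form a basis of \<open>S \<otimes> S\<close> and \<open>\<phi>\<close> maps them to basis elements, so
  the kernel of \<open>\<phi>\<close> is spanned by differences of monomials lying in a common fibre
  \<open>([D], D + E)\<close>.  Two such monomials differ by a monomial multiple of a binomial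
  \<open>x\<^sup>A \<otimes> x\<^sup>A\<^sup>' - x\<^sup>A\<^sup>' \<otimes> x\<^sup>A\<close> with \<open>[A] = [A']\<close>; this gives the first generating set
  (theorem \<open>kernel_eq_homogeneous_ideal\<close>, valid for arbitrary vectors \<open>n\<^sub>j\<close>).

  For the second generating set, every such binomial is a monomial multiple of a toric
  binomial \<open>x\<^sup>D\<^sup>+\<^sup>(\<^sup>m\<^sup>) \<otimes> x\<^sup>D\<^sup>-\<^sup>(\<^sup>m\<^sup>) - x\<^sup>D\<^sup>-\<^sup>(\<^sup>m\<^sup>) \<otimes> x\<^sup>D\<^sup>+\<^sup>(\<^sup>m\<^sup>)\<close>.  The point \<open>m\<close> lies in some chamber \<open>\<Gamma>\<close>,
  on which each \<open>\<langle>-,n\<^sub>j\<rangle>\<close> has constant sign; hence \<open>D\<^sup>\<plusminus>\<close> is additive on \<open>M \<inter> \<Gamma>\<close>, and writing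
  \<open>m\<close> as a sum of generators of \<open>M \<inter> \<Gamma>\<close> shows that its toric binomial lies in the ideal of
  the generators' toric binomials (theorem \<open>kernel_eq_generator_ideal\<close>; only \<open>n\<^sub>j \<noteq> 0\<close>
  is used).
\<close>

section \<open>Ideals generated by a set\<close>

text \<open>\<open>ideal_generated G\<close> is the span of \<open>G\<close> for the ring viewed as a module over itself; the
  module interpretation is kept local since its simp rules interfere with ring normalisation.\<close>

context
begin

interpretation ring_module: module "(*) :: 'a::comm_ring_1 \<Rightarrow> 'a \<Rightarrow> 'a"
  by unfold_locales (simp_all add: algebra_simps)

lemma ideal_generated_eq_span: "ideal_generated G = ring_module.span G"
  unfolding ideal_generated_def ring_module.span_explicit by blast

lemma ideal_generated_base: "g \<in> G \<Longrightarrow> g \<in> ideal_generated G"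
  unfolding ideal_generated_eq_span by (rule ring_module.span_base)

lemma ideal_generated_mult: "x \<in> ideal_generated G \<Longrightarrow> c * x \<in> ideal_generated G"
  unfolding ideal_generated_eq_span by (rule ring_module.span_scale)

lemma ideal_generated_add:
  "x \<in> ideal_generated G \<Longrightarrow> y \<in> ideal_generated G \<Longrightarrow> x + y \<in> ideal_generated G"
  unfolding ideal_generated_eq_span by (rule ring_module.span_add)

lemma ideal_generated_sum:
  "(\<And>x. x \<in> A \<Longrightarrow> f x \<in> ideal_generated G) \<Longrightarrow> (\<Sum>x\<in>A. f x) \<in> ideal_generated G"
  unfolding ideal_generated_eq_span by (rule ring_module.span_sum)

lemma ideal_generated_mono: "G \<subseteq> H \<Longrightarrow> ideal_generated G \<subseteq> ideal_generated H"
  unfolding ideal_generated_eq_span by (rule ring_module.span_mono)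

lemma ideal_generated_eqI:
  assumes "G \<subseteq> ideal_generated H" and "H \<subseteq> ideal_generated G"
  shows "ideal_generated G = ideal_generated H"
  using assms unfolding ideal_generated_eq_span
  by (metis ring_module.span_mono ring_module.span_span subset_antisym)

end

section \<open>Binomials in \<open>S \<otimes> S\<close>\<close>

abbreviation (input) lk :: "('a \<Rightarrow>\<^sub>0 'b::zero) \<Rightarrow> 'a \<Rightarrow> 'b" where
  "lk \<equiv> Poly_Mapping.lookup"

lemma mono2_mult: "mono2 A B * mono2 C D = mono2 (A + C) (B + D)"
  unfolding mono2_def by (simp add: mult_single)

definition binom :: "('j \<Rightarrow>\<^sub>0 nat) \<Rightarrow> ('j \<Rightarrow>\<^sub>0 nat) \<Rightarrow> 'j SS" where
  "binom D E = mono2 D E - mono2 E D"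

lemma binom_shift: "binom (G + D) (G + E) = mono2 G G * binom D E"
  unfolding binom_def right_diff_distrib mono2_mult ..

lemma binom_add:
  "binom (A + A') (B + B') = mono2 A' B' * binom A B + mono2 B A * binom A' B'"
  unfolding binom_def right_diff_distrib mono2_mult by (simp add: add_ac)

lemma binom_zero: "binom 0 0 = 0"
  unfolding binom_def by simp
section \<open>Degree classes\<close>

lemma pairing_add: "pairing (a + b) v = pairing a v + pairing b v"
  unfolding pairing_def by (simp add: distrib_right sum.distrib)

lemma pairing_zero: "pairing 0 v = 0"
  unfolding pairing_def by simp

lemma pairing_uminus: "pairing (- a) v = - pairing a v"
  unfolding pairing_def by (simp add: sum_negf)

lemma deg_class_subset:
  assumes "\<And>j. int (lk D j) - int (lk E j) = pairing m (n j)"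
  shows "deg_class n D \<subseteq> deg_class n E"
proof
  fix v assume "v \<in> deg_class n D"
  then obtain m' where "\<forall>j. v j - int (lk D j) = pairing m' (n j)"
    unfolding deg_class_def by blast
  then have "\<forall>j. v j - int (lk E j) = pairing (m' + m) (n j)"
    using assms by (simp add: pairing_add algebra_simps)
  then show "v \<in> deg_class n E"
    unfolding deg_class_def by blast
qed

lemma deg_class_eq_iff:
  "deg_class n D = deg_class n E \<longleftrightarrow> (\<exists>m. \<forall>j. int (lk D j) - int (lk E j) = pairing m (n j))"
proof
  assume "deg_class n D = deg_class n E"
  moreover have "(\<lambda>j. int (lk D j)) \<in> deg_class n D"
    unfolding deg_class_def by (auto intro!: exI[of _ 0] simp: pairing_zero)
  ultimately show "\<exists>m. \<forall>j. int (lk D j) - int (lk E j) = pairing m (n j)"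
    unfolding deg_class_def by simp
next
  assume "\<exists>m. \<forall>j. int (lk D j) - int (lk E j) = pairing m (n j)"
  then obtain m where m: "\<And>j. int (lk D j) - int (lk E j) = pairing m (n j)" by blast
  have "int (lk E j) - int (lk D j) = pairing (- m) (n j)" for j
    using m[of j] by (simp add: pairing_uminus)
  with m show "deg_class n D = deg_class n E"
    by (intro equalityI deg_class_subset)
qed

section \<open>The kernel of \<open>phi\<close>\<close>

text \<open>\<open>phi\<close> sends the basis monomial indexed by \<open>k = (D, E)\<close> to the basis element indexed by
  \<open>phi_index n k = ([D], D + E)\<close>; the kernel is described fibrewise.\<close>

definition phi_index :: "('j::finite \<Rightarrow> int^'r) \<Rightarrow> ('j \<Rightarrow>\<^sub>0 nat) \<times> ('j \<Rightarrow>\<^sub>0 nat) \<Rightarrow> ('j \<Rightarrow> int) set \<times> ('j \<Rightarrow>\<^sub>0 nat)" where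
  "phi_index n k = (deg_class n (fst k), fst k + snd k)"

lemma lookup_phi:
  assumes "finite K" and "Poly_Mapping.keys f \<subseteq> K"
  shows "lk (phi n f) t = (\<Sum>k\<in>K. if phi_index n k = t then lk f k else 0)"
proof -
  have "lk (phi n f) t = (\<Sum>k\<in>Poly_Mapping.keys f. if phi_index n k = t then lk f k else 0)"
    unfolding phi_def lookup_sum lookup_single when_def phi_index_def by (simp add: eq_commute)
  also have "\<dots> = (\<Sum>k\<in>K. if phi_index n k = t then lk f k else 0)"
    by (rule sum.mono_neutral_left) (use assms in \<open>auto simp: in_keys_iff\<close>)
  finally show ?thesis .
qed

lemma phi_add: "phi n (f + g) = phi n f + phi n g"
proof (rule poly_mapping_eqI)
  fix t
  let ?K = "Poly_Mapping.keys f \<union> Poly_Mapping.keys g \<union> Poly_Mapping.keys (f + g)"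
  have K: "finite ?K" "Poly_Mapping.keys (f + g) \<subseteq> ?K"
    "Poly_Mapping.keys f \<subseteq> ?K" "Poly_Mapping.keys g \<subseteq> ?K"
    by auto
  show "lk (phi n (f + g)) t = lk (phi n f + phi n g) t"
    unfolding lookup_add lookup_phi[OF K(1,2)] lookup_phi[OF K(1,3)] lookup_phi[OF K(1,4)]
    by (auto simp: lookup_add sum.distrib[symmetric] intro!: sum.cong)
qed

lemma phi_zero: "phi n 0 = 0"
  unfolding phi_def by simp

lemma phi_diff: "phi n (f - g) = phi n f - phi n g"
  using phi_add[of n "f - g" g] by (simp add: eq_diff_eq)

lemma phi_sum: "phi n (\<Sum>x\<in>A. f x) = (\<Sum>x\<in>A. phi n (f x))"
  by (induction A rule: infinite_finite_induct) (simp_all add: phi_zero phi_add)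

lemma phi_single: "phi n (Poly_Mapping.single k c) = Poly_Mapping.single (phi_index n k) c"
proof (rule poly_mapping_eqI)
  fix t
  have "Poly_Mapping.keys (Poly_Mapping.single k c) \<subseteq> {k}" by simp
  then show "lk (phi n (Poly_Mapping.single k c)) t = lk (Poly_Mapping.single (phi_index n k) c) t"
    by (simp add: lookup_phi[of "{k}"] lookup_single when_def)
qed

lemma poly_mapping_sum_terms: "f = (\<Sum>k\<in>Poly_Mapping.keys f. Poly_Mapping.single k (lk f k))"
  by (rule poly_mapping_eqI) (simp add: lookup_sum lookup_single when_def in_keys_iff)

definition homogeneous_binomials :: "('j::finite \<Rightarrow> int^'r) \<Rightarrow> 'j SS set" where
  "homogeneous_binomials n = {binom D E | D E. deg_class n D = deg_class n E}"

lemma phi_index_swap: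
  assumes "deg_class n D = deg_class n E"
  shows "phi_index n (k + (D, E)) = phi_index n (k + (E, D))"
proof -
  obtain m where m: "\<forall>j. int (lk D j) - int (lk E j) = pairing m (n j)"
    using assms deg_class_eq_iff by blast
  then have "\<forall>j. int (lk (fst k + D) j) - int (lk (fst k + E) j) = pairing m (n j)"
    by (simp add: lookup_add)
  then have "deg_class n (fst k + D) = deg_class n (fst k + E)"
    using deg_class_eq_iff by blast
  moreover have "fst k + D + (snd k + E) = fst k + E + (snd k + D)"
    by (simp add: add_ac)
  ultimately show ?thesis
    unfolding phi_index_def by (cases k) simp
qed

lemma phi_mult_binom:
  assumes "deg_class n D = deg_class n E"
  shows "phi n (c * binom D E) = 0"
proof -
  have "c * binom D E = (\<Sum>k\<in>Poly_Mapping.keys c.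
          Poly_Mapping.single (k + (D, E)) (lk c k) - Poly_Mapping.single (k + (E, D)) (lk c k))"
    by (subst poly_mapping_sum_terms[of c])
       (simp add: sum_distrib_right binom_def mono2_def right_diff_distrib mult_single sum_subtractf)
  then show ?thesis
    by (simp add: phi_sum phi_diff phi_single phi_index_swap[OF assms])
qed

lemma homogeneous_ideal_subset_kernel:
  "ideal_generated (homogeneous_binomials n) \<subseteq> {f. phi n f = 0}"
proof
  fix f assume "f \<in> ideal_generated (homogeneous_binomials n)"
  then obtain F c where F: "F \<subseteq> homogeneous_binomials n" "f = (\<Sum>g\<in>F. c g * g)"
    unfolding ideal_generated_def by blast
  have "phi n (c g * g) = 0" if "g \<in> F" for g
    using F(1) that phi_mult_binom unfolding homogeneous_binomials_def by blast
  then show "f \<in> {f. phi n f = 0}"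
    using F(2) by (simp add: phi_sum)
qed

text \<open>Two monomials in the same fibre of \<open>phi_index\<close> differ by an element of the ideal:
  after cancelling their common factor, what remains is a homogeneous binomial.\<close>

lemma fibre_difference_in_ideal:
  assumes "phi_index n (D, E) = phi_index n (D', E')"
  shows "mono2 D E - mono2 D' E' \<in> ideal_generated (homogeneous_binomials n)"
proof -
  have deg: "deg_class n D = deg_class n D'" and sum: "\<And>j. lk D j + lk E j = lk D' j + lk E' j"
    using assms unfolding phi_index_def by (auto simp: poly_mapping_eq_iff lookup_add fun_eq_iff)
  define G where "G = Abs_poly_mapping (\<lambda>j. min (lk D j) (lk D' j))"
  define A where "A = Abs_poly_mapping (\<lambda>j. lk D j - lk D' j)"
  define A' where "A' = Abs_poly_mapping (\<lambda>j. lk D' j - lk D j)"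
  define H where "H = Abs_poly_mapping (\<lambda>j. lk E j - (lk D' j - lk D j))"
  have lookups: "lk G j = min (lk D j) (lk D' j)" "lk A j = lk D j - lk D' j"
    "lk A' j = lk D' j - lk D j" "lk H j = lk E j - (lk D' j - lk D j)" for j
    unfolding G_def A_def A'_def H_def by simp_all
  have "lk D j = lk G j + lk A j \<and> lk D' j = lk G j + lk A' j \<and>
        lk E j = lk H j + lk A' j \<and> lk E' j = lk H j + lk A j" for j
    unfolding lookups using sum[of j] by arith
  then have "D = G + A" "D' = G + A'" "E = H + A'" "E' = H + A"
    by (auto intro!: poly_mapping_eqI simp: lookup_add)
  then have factor: "mono2 D E - mono2 D' E' = mono2 G H * binom A A'"
    unfolding binom_def right_diff_distrib mono2_mult by (simp add: add_ac)
  obtain m where m: "\<forall>j. int (lk D j) - int (lk D' j) = pairing m (n j)"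
    using deg deg_class_eq_iff by blast
  have "int (lk A j) - int (lk A' j) = int (lk D j) - int (lk D' j)" for j
    unfolding lookups by arith
  with m have "binom A A' \<in> homogeneous_binomials n"
    unfolding homogeneous_binomials_def deg_class_eq_iff by auto
  then show ?thesis
    unfolding factor by (simp add: ideal_generated_base ideal_generated_mult)
qed

lemma single_sum: "Poly_Mapping.single k (\<Sum>x\<in>A. c x) = (\<Sum>x\<in>A. Poly_Mapping.single k (c x))"
  by (induction A rule: infinite_finite_induct) (simp_all add: single_add)

text \<open>Conversely, an element of the kernel has vanishing coefficient sum on every fibre of
  \<open>phi_index\<close>; moving all its terms onto one representative monomial per fibre therefore
  leaves zero, and each move is a multiple of a fibre difference.\<close>

lemma kernel_subset_homogeneous_ideal:
  assumes "phi n f = 0"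
  shows "f \<in> ideal_generated (homogeneous_binomials n)"
proof -
  define K where "K = Poly_Mapping.keys f"
  define rep where "rep t = (SOME k. k \<in> K \<and> phi_index n k = t)" for t
  have rep: "phi_index n (rep (phi_index n k)) = phi_index n k" if "k \<in> K" for k
    unfolding rep_def by (rule someI2[of _ k]) (use that in auto)
  have "finite K" unfolding K_def by simp
  have fibre_sum: "(\<Sum>k\<in>{k\<in>K. phi_index n k = t}. lk f k) = 0" for t
    unfolding sum.inter_filter[OF \<open>finite K\<close>]
    using lookup_phi[OF \<open>finite K\<close>, of f n t] assms by (simp add: K_def)
  have moved: "(\<Sum>k\<in>K. Poly_Mapping.single (rep (phi_index n k)) (lk f k)) = 0"
  proof -
    have "(\<Sum>k\<in>K. Poly_Mapping.single (rep (phi_index n k)) (lk f k)) =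
          (\<Sum>t\<in>phi_index n ` K. \<Sum>k\<in>{k\<in>K. phi_index n k = t}. Poly_Mapping.single (rep t) (lk f k))"
      unfolding sum.image_gen[OF \<open>finite K\<close>, where g = "phi_index n"]
      by (intro sum.cong refl) auto
    also have "\<dots> = 0"
      by (simp add: single_sum[symmetric] fibre_sum)
    finally show ?thesis .
  qed
  have "Poly_Mapping.single k (lk f k) - Poly_Mapping.single (rep (phi_index n k)) (lk f k)
          \<in> ideal_generated (homogeneous_binomials n)" if "k \<in> K" for k
  proof -
    obtain D E D' E' where k: "k = (D, E)" and k': "rep (phi_index n k) = (D', E')"
      by (cases k, cases "rep (phi_index n k)") auto
    have "Poly_Mapping.single k (lk f k) - Poly_Mapping.single (rep (phi_index n k)) (lk f k) =
          Poly_Mapping.single 0 (lk f k) * (mono2 D E - mono2 D' E')"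
      unfolding k' unfolding k mono2_def right_diff_distrib mult_single by simp
    moreover have "mono2 D E - mono2 D' E' \<in> ideal_generated (homogeneous_binomials n)"
      using rep[OF that] k k' by (intro fibre_difference_in_ideal) simp
    ultimately show ?thesis
      by (simp add: ideal_generated_mult)
  qed
  then have "(\<Sum>k\<in>K. Poly_Mapping.single k (lk f k) - Poly_Mapping.single (rep (phi_index n k)) (lk f k))
          \<in> ideal_generated (homogeneous_binomials n)"
    by (rule ideal_generated_sum)
  moreover have "f = (\<Sum>k\<in>K. Poly_Mapping.single k (lk f k) - Poly_Mapping.single (rep (phi_index n k)) (lk f k))"
    using poly_mapping_sum_terms[of f] moved by (simp add: sum_subtractf K_def)
  ultimately show ?thesis by simp
qed

theorem kernel_eq_homogeneous_ideal:
  "{f. phi n f = 0} = ideal_generated (homogeneous_binomials n)"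
  using homogeneous_ideal_subset_kernel kernel_subset_homogeneous_ideal by blast

section \<open>Chambers of the hyperplane arrangement\<close>

lemma rvec_inner: "rvec a \<bullet> rvec b = real_of_int (pairing a b)"
  unfolding inner_vec_def rvec_def pairing_def by simp

lemma rvec_nonzero: "v \<noteq> 0 \<Longrightarrow> rvec v \<noteq> 0"
  unfolding rvec_def by (auto simp: vec_eq_iff)

lemma connected_sign_constant:
  fixes w :: "'a::euclidean_space"
  assumes "connected C" and "\<forall>x\<in>C. x \<bullet> w \<noteq> 0" and "c \<in> C" and "x \<in> C"
  shows "0 < (c \<bullet> w) * (x \<bullet> w)"
proof (rule ccontr)
  assume "\<not> 0 < (c \<bullet> w) * (x \<bullet> w)"
  then have "(c \<bullet> w \<le> 0 \<and> 0 \<le> x \<bullet> w) \<or> (x \<bullet> w \<le> 0 \<and> 0 \<le> c \<bullet> w)"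
    by (auto simp: zero_less_mult_iff not_less)
  then obtain z where "z \<in> C" "w \<bullet> z = 0"
    using connected_ivt_hyperplane[OF assms(1,3,4), of w 0]
          connected_ivt_hyperplane[OF assms(1,4,3), of w 0]
    by (auto simp: inner_commute)
  then show False
    using assms(2) by (auto simp: inner_commute)
qed

lemma chamber_sign_vector:
  assumes "chamber n \<Gamma>"
  obtains s where "\<And>j. s j \<noteq> 0" and "\<And>j x. x \<in> \<Gamma> \<Longrightarrow> 0 \<le> s j * (x \<bullet> rvec (n j))"
proof -
  let ?U = "UNIV - (\<Union>j. {x. x \<bullet> rvec (n j) = 0})"
  obtain C where C: "C \<in> components ?U" "\<Gamma> = closure C"
    using assms unfolding chamber_def by blast
  obtain c where "c \<in> C"
    using in_components_nonempty[OF C(1)] by blast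
  have avoid: "\<forall>x\<in>C. x \<bullet> rvec (n j) \<noteq> 0" for j
    using in_components_subset[OF C(1)] by blast
  define s where "s j = c \<bullet> rvec (n j)" for j
  have "s j \<noteq> 0" for j
    using avoid \<open>c \<in> C\<close> unfolding s_def by blast
  moreover have "0 \<le> s j * (x \<bullet> rvec (n j))" if "x \<in> \<Gamma>" for j x
  proof -
    have "C \<subseteq> {x. 0 \<le> (s j *\<^sub>R rvec (n j)) \<bullet> x}"
      using connected_sign_constant[OF in_components_connected[OF C(1)] avoid \<open>c \<in> C\<close>]
      by (auto simp: s_def inner_commute less_imp_le)
    then have "\<Gamma> \<subseteq> {x. 0 \<le> (s j *\<^sub>R rvec (n j)) \<bullet> x}"
      unfolding C(2) by (rule closure_minimal) (rule closed_halfspace_ge)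
    then show ?thesis
      using that by (auto simp: inner_commute)
  qed
  ultimately show ?thesis by (rule that)
qed

text \<open>Near any point \<open>p\<close> there is a point \<open>u\<close> off all hyperplanes of a finite arrangement
  (the union of the hyperplanes is negligible) on the same side as \<open>p\<close> of every hyperplane
  not containing \<open>p\<close>.\<close>

lemma generic_point_near:
  fixes w :: "'j::finite \<Rightarrow> 'a::euclidean_space" and p :: 'a
  assumes "\<And>j. w j \<noteq> 0"
  obtains u where "\<And>j. u \<bullet> w j \<noteq> 0" and "\<And>j. p \<bullet> w j \<noteq> 0 \<Longrightarrow> 0 < (p \<bullet> w j) * (u \<bullet> w j)"
proof -
  define V where "V = (\<Inter>j\<in>{j. p \<bullet> w j \<noteq> 0}. {x. 0 < ((p \<bullet> w j) *\<^sub>R w j) \<bullet> x})"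
  have "open V"
    unfolding V_def by (intro open_INT ballI open_halfspace_gt) simp
  moreover have "p \<in> V"
    unfolding V_def by (auto simp: inner_commute zero_less_mult_iff)
  ultimately have "\<not> negligible V"
    using open_not_negligible by blast
  moreover have "negligible (\<Union>j. {x. w j \<bullet> x = 0})"
    using assms by (intro negligible_Union) (auto intro!: negligible_hyperplane)
  ultimately obtain u where "u \<in> V" "u \<notin> (\<Union>j. {x. w j \<bullet> x = 0})"
    using negligible_subset[of "\<Union>j. {x. w j \<bullet> x = 0}" V] by blast
  then show ?thesis
    by (intro that) (auto simp: V_def inner_commute)
qed

lemma open_segment_avoids_hyperplanes:
  fixes w :: "'j \<Rightarrow> 'a::euclidean_space"
  assumes u: "u \<bullet> w j \<noteq> 0" and side: "p \<bullet> w j \<noteq> 0 \<Longrightarrow> 0 < (p \<bullet> w j) * (u \<bullet> w j)"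
    and y: "y \<in> open_segment p u"
  shows "y \<bullet> w j \<noteq> 0"
proof -
  obtain t where t: "0 < t" "t < 1" "y = (1 - t) *\<^sub>R p + t *\<^sub>R u"
    using y unfolding in_segment by auto
  show ?thesis
  proof (cases "p \<bullet> w j = 0")
    case True
    then show ?thesis using t u by (simp add: inner_add_left)
  next
    case False
    have "0 < (1 - t) * (p \<bullet> w j)\<^sup>2"
      using t False by simp
    moreover have "0 < t * ((p \<bullet> w j) * (u \<bullet> w j))"
      using t side[OF False] by simp
    ultimately have "0 < (1 - t) * (p \<bullet> w j)\<^sup>2 + t * ((p \<bullet> w j) * (u \<bullet> w j))"
      by (rule add_pos_pos)
    then have "0 < (p \<bullet> w j) * (y \<bullet> w j)"
      unfolding t(3) by (simp add: algebra_simps power2_eq_square)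
    then show ?thesis by auto
  qed
qed

text \<open>Every point lies in the closure of some component of the complement of a finite
  arrangement of hyperplanes: it is a limit of points of an open segment avoiding them.\<close>

lemma point_in_closure_of_component:
  fixes w :: "'j::finite \<Rightarrow> 'a::euclidean_space"
  assumes "\<And>j. w j \<noteq> 0"
  obtains C where "C \<in> components (UNIV - (\<Union>j. {x. x \<bullet> w j = 0}))" and "p \<in> closure C"
proof -
  let ?U = "UNIV - (\<Union>j. {x. x \<bullet> w j = 0})"
  obtain u where u: "\<And>j. u \<bullet> w j \<noteq> 0"
    and side: "\<And>j. p \<bullet> w j \<noteq> 0 \<Longrightarrow> 0 < (p \<bullet> w j) * (u \<bullet> w j)"
    by (rule generic_point_near[of w p, OF assms]) blast
  show ?thesis
  proof (cases "p \<in> ?U")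
    case True
    then have "p \<in> connected_component_set ?U p"
      by (simp add: connected_component_refl)
    then show ?thesis
      using that[OF componentsI[OF True]] closure_subset by blast
  next
    case False
    then obtain j where "p \<bullet> w j = 0"
      by blast
    then have "p \<noteq> u"
      using u[of j] by blast
    have segment: "open_segment p u \<subseteq> ?U"
      using open_segment_avoids_hyperplanes[of u w _ p, OF u side] by blast
    define y where "y = midpoint p u"
    have "y \<in> open_segment p u"
      using \<open>p \<noteq> u\<close> unfolding y_def by (simp add: midpoint_in_open_segment)
    then have "closure (open_segment p u) \<subseteq> closure (connected_component_set ?U y)"
      by (intro closure_mono connected_component_maximal segment convex_connected convex_open_segment)
    moreover have "p \<in> closure (open_segment p u)"
      using \<open>p \<noteq> u\<close> by simp
    moreover have "y \<in> ?U"
      using segment \<open>y \<in> open_segment p u\<close> by blast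
    ultimately show ?thesis
      using that[OF componentsI] by blast
  qed
qed

lemma point_in_chamber:
  assumes "\<And>j. n j \<noteq> 0"
  obtains \<Gamma> where "chamber n \<Gamma>" and "p \<in> \<Gamma>"
proof -
  have "rvec (n j) \<noteq> 0" for j
    using assms rvec_nonzero by blast
  then obtain C where "C \<in> components (UNIV - (\<Union>j. {x. x \<bullet> rvec (n j) = 0}))" "p \<in> closure C"
    by (rule point_in_closure_of_component)
  then show ?thesis
    using that unfolding chamber_def by blast
qed

section \<open>Toric binomials\<close>

lemma lookup_Dplus: "lk (Dplus n m) j = nat (pairing m (n j))"
  unfolding Dplus_def by simp

lemma lookup_Dminus: "lk (Dminus n m) j = nat (- pairing m (n j))"
  unfolding Dminus_def by simp

text \<open>The toric binomial of \<open>m \<in> M\<close>; it is homogeneous since \<open>D\<^sup>+(m) - D\<^sup>-(m)\<close> is the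
  divisor of \<open>m\<close>.\<close>

definition toric_binomial :: "('j::finite \<Rightarrow> int^'r) \<Rightarrow> int^'r \<Rightarrow> 'j SS" where
  "toric_binomial n m = binom (Dplus n m) (Dminus n m)"

lemma toric_binomial_homogeneous: "toric_binomial n m \<in> homogeneous_binomials n"
proof -
  have "deg_class n (Dplus n m) = deg_class n (Dminus n m)"
    unfolding deg_class_eq_iff lookup_Dplus lookup_Dminus by (intro exI[of _ m]) auto
  then show ?thesis
    unfolding toric_binomial_def homogeneous_binomials_def by blast
qed

text \<open>Every homogeneous binomial is a monomial multiple of a toric binomial: if
  \<open>D - E = div(m)\<close> then \<open>D = G + D\<^sup>+(m)\<close> and \<open>E = G + D\<^sup>-(m)\<close> with \<open>G = min(D,E)\<close>.\<close>

lemma homogeneous_binomial_factor: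
  assumes "deg_class n D = deg_class n E"
  obtains G m where "binom D E = mono2 G G * toric_binomial n m"
proof -
  obtain m where m: "\<And>j. int (lk D j) - int (lk E j) = pairing m (n j)"
    using assms deg_class_eq_iff by blast
  define G where "G = Abs_poly_mapping (\<lambda>j. min (lk D j) (lk E j))"
  have "lk D j = min (lk D j) (lk E j) + nat (pairing m (n j)) \<and>
        lk E j = min (lk D j) (lk E j) + nat (- pairing m (n j))" for j
    using m[of j] by arith
  then have "D = G + Dplus n m" "E = G + Dminus n m"
    unfolding G_def by (auto intro!: poly_mapping_eqI simp: lookup_add lookup_Dplus lookup_Dminus)
  then have "binom D E = mono2 G G * toric_binomial n m"
    unfolding toric_binomial_def by (simp add: binom_shift)
  then show ?thesis by (rule that)
qed

lemma nat_add_same_sign: "0 \<le> x * y \<Longrightarrow> nat (x + y) = nat x + nat (y :: int)"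
  by (auto simp: zero_le_mult_iff)

lemma toric_binomial_add:
  assumes "\<And>j. 0 \<le> pairing a (n j) * pairing b (n j)"
  shows "toric_binomial n (a + b) =
           mono2 (Dplus n b) (Dminus n b) * toric_binomial n a +
           mono2 (Dminus n a) (Dplus n a) * toric_binomial n b"
proof -
  have "nat (pairing (a + b) (n j)) = nat (pairing a (n j)) + nat (pairing b (n j))"
       "nat (- pairing (a + b) (n j)) = nat (- pairing a (n j)) + nat (- pairing b (n j))" for j
    using nat_add_same_sign[OF assms[of j]] nat_add_same_sign[of "- pairing a (n j)" "- pairing b (n j)"]
      assms[of j] by (simp_all add: pairing_add)
  then have "Dplus n (a + b) = Dplus n a + Dplus n b" "Dminus n (a + b) = Dminus n a + Dminus n b"
    by (auto intro!: poly_mapping_eqI simp: lookup_add lookup_Dplus lookup_Dminus)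
  then show ?thesis
    unfolding toric_binomial_def by (simp add: binom_add)
qed

text \<open>The lattice points of a chamber lie in a cone cut out by a sign vector \<open>s\<close>.\<close>

definition sign_cone :: "('j \<Rightarrow> int^'r) \<Rightarrow> ('j \<Rightarrow> real) \<Rightarrow> (int^'r) set" where
  "sign_cone n s = {m. \<forall>j. 0 \<le> s j * real_of_int (pairing m (n j))}"

lemma sign_cone_add: "a \<in> sign_cone n s \<Longrightarrow> b \<in> sign_cone n s \<Longrightarrow> a + b \<in> sign_cone n s"
  unfolding sign_cone_def by (simp add: pairing_add distrib_left)

lemma sign_cone_sum: "g ` X \<subseteq> sign_cone n s \<Longrightarrow> (\<Sum>x\<in>X. g x) \<in> sign_cone n s"
proof (induction X rule: infinite_finite_induct)
  case (insert x X)
  then show ?case by (simp add: sign_cone_add)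
qed (simp_all add: sign_cone_def pairing_zero)

lemma sign_cone_same_sign:
  assumes "s j \<noteq> 0" and "a \<in> sign_cone n s" and "b \<in> sign_cone n s"
  shows "0 \<le> pairing a (n j) * pairing b (n j)"
proof -
  have "0 \<le> (s j * of_int (pairing a (n j))) * (s j * of_int (pairing b (n j)))"
    using assms(2,3) unfolding sign_cone_def by simp
  then have "0 \<le> (s j)\<^sup>2 * of_int (pairing a (n j) * pairing b (n j))"
    by (simp add: power2_eq_square algebra_simps)
  then show ?thesis
    using assms(1) by (simp add: zero_le_mult_iff)
qed

lemma toric_binomial_sum:
  assumes s: "\<And>j. s j \<noteq> 0"
    and "finite X" and "g ` X \<subseteq> sign_cone n s"
  shows "toric_binomial n (\<Sum>x\<in>X. g x) \<in> ideal_generated (toric_binomial n ` g ` X)"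
  using assms(2,3)
proof (induction X rule: finite_induct)
  case empty
  have "toric_binomial n 0 = 0"
    unfolding toric_binomial_def Dplus_def Dminus_def by (simp add: pairing_zero binom_zero)
  then show ?case
    unfolding ideal_generated_def by (auto intro!: exI[of _ "{}"])
next
  case (insert x X)
  have sum_cone: "(\<Sum>x\<in>X. g x) \<in> sign_cone n s"
    using insert.prems by (intro sign_cone_sum) auto
  have mono: "ideal_generated (toric_binomial n ` g ` Y) \<subseteq> ideal_generated (toric_binomial n ` g ` insert x X)"
    if "Y \<subseteq> insert x X" for Y
    using that by (intro ideal_generated_mono image_mono)
  have "toric_binomial n (g x) \<in> ideal_generated (toric_binomial n ` g ` insert x X)"
    by (simp add: ideal_generated_base)
  moreover have "toric_binomial n (\<Sum>x\<in>X. g x) \<in> ideal_generated (toric_binomial n ` g ` insert x X)"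
    using insert.IH insert.prems mono[of X] by auto
  ultimately show ?case
    using insert.hyps insert.prems sign_cone_same_sign[OF s _ sum_cone]
    by (simp add: toric_binomial_add ideal_generated_add ideal_generated_mult)
qed

lemma int_smult_eq_sum: "int k *s (v :: int^'r) = (\<Sum>i<k. v)"
  by (induction k) (simp_all add: vector_sadd_rdistrib add.commute del: sum_constant)

text \<open>Choose a chamber containing \<open>m\<close> and
  write \<open>m\<close> as a nonnegative combination of generators of that chamber; all summands lie
  in the sign cone of the chamber.\<close>

lemma toric_binomial_in_generator_ideal:
  assumes nz: "\<And>j. n j \<noteq> 0"
    and Xi: "\<forall>\<Gamma>. chamber n \<Gamma> \<longrightarrow> semigroup_generators (Xi \<Gamma>) \<Gamma>"
  shows "toric_binomial n m \<in> ideal_generated {toric_binomial n \<xi> | \<xi>. \<exists>\<Gamma>. chamber n \<Gamma> \<and> \<xi> \<in> Xi \<Gamma>}"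
proof -
  obtain \<Gamma> where \<Gamma>: "chamber n \<Gamma>" "rvec m \<in> \<Gamma>"
    by (rule point_in_chamber[OF nz])
  obtain s where s: "\<And>j. s j \<noteq> 0" "\<And>j x. x \<in> \<Gamma> \<Longrightarrow> 0 \<le> s j * (x \<bullet> rvec (n j))"
    using chamber_sign_vector[OF \<Gamma>(1)] by metis
  have gen: "semigroup_generators (Xi \<Gamma>) \<Gamma>"
    using Xi \<Gamma>(1) by blast
  then obtain F c where F: "finite F" "F \<subseteq> Xi \<Gamma>" "m = (\<Sum>\<xi>\<in>F. int (c \<xi>) *s \<xi>)"
    using \<Gamma>(2) unfolding semigroup_generators_def by blast
  have F_cone: "F \<subseteq> sign_cone n s"
  proof
    fix \<xi> assume "\<xi> \<in> F"
    then have "rvec \<xi> \<in> \<Gamma>"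
      using gen F(2) unfolding semigroup_generators_def by blast
    then have "0 \<le> s j * (rvec \<xi> \<bullet> rvec (n j))" for j
      by (rule s(2))
    then show "\<xi> \<in> sign_cone n s"
      unfolding sign_cone_def rvec_inner by simp
  qed
  define X where "X = Sigma F (\<lambda>\<xi>. {..<c \<xi>})"
  have "finite X"
    using F(1) unfolding X_def by simp
  have "m = (\<Sum>\<xi>\<in>F. \<Sum>i<c \<xi>. \<xi>)"
    unfolding F(3) int_smult_eq_sum ..
  also have "\<dots> = (\<Sum>(\<xi>, i)\<in>X. \<xi>)"
    unfolding X_def using F(1) by (rule sum.Sigma) simp
  finally have m_sum: "m = (\<Sum>x\<in>X. fst x)"
    by (simp add: case_prod_unfold)
  have "fst ` X \<subseteq> F"
    unfolding X_def by auto
  then have "toric_binomial n (\<Sum>x\<in>X. fst x) \<in> ideal_generated (toric_binomial n ` fst ` X)"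
    using F_cone by (intro toric_binomial_sum[OF s(1) \<open>finite X\<close>]) auto
  moreover have "toric_binomial n ` fst ` X \<subseteq> {toric_binomial n \<xi> | \<xi>. \<exists>\<Gamma>. chamber n \<Gamma> \<and> \<xi> \<in> Xi \<Gamma>}"
    using \<open>fst ` X \<subseteq> F\<close> F(2) \<Gamma>(1) by blast
  ultimately show ?thesis
    unfolding m_sum using ideal_generated_mono by blast
qed

theorem kernel_eq_generator_ideal:
  assumes "\<And>j. n j \<noteq> 0"
    and "\<forall>\<Gamma>. chamber n \<Gamma> \<longrightarrow> semigroup_generators (Xi \<Gamma>) \<Gamma>"
  shows "{f. phi n f = 0} = ideal_generated {toric_binomial n \<xi> | \<xi>. \<exists>\<Gamma>. chamber n \<Gamma> \<and> \<xi> \<in> Xi \<Gamma>}"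
  unfolding kernel_eq_homogeneous_ideal
proof (rule ideal_generated_eqI)
  show "homogeneous_binomials n
          \<subseteq> ideal_generated {toric_binomial n \<xi> | \<xi>. \<exists>\<Gamma>. chamber n \<Gamma> \<and> \<xi> \<in> Xi \<Gamma>}"
  proof
    fix g assume "g \<in> homogeneous_binomials n"
    then obtain D E where "g = binom D E" "deg_class n D = deg_class n E"
      unfolding homogeneous_binomials_def by blast
    then obtain G m where "g = mono2 G G * toric_binomial n m"
      using homogeneous_binomial_factor by metis
    then show "g \<in> ideal_generated {toric_binomial n \<xi> | \<xi>. \<exists>\<Gamma>. chamber n \<Gamma> \<and> \<xi> \<in> Xi \<Gamma>}"
      using toric_binomial_in_generator_ideal[OF assms] by (simp add: ideal_generated_mult)
  qed
  show "{toric_binomial n \<xi> | \<xi>. \<exists>\<Gamma>. chamber n \<Gamma> \<and> \<xi> \<in> Xi \<Gamma>} \<subseteq> ideal_generated (homogeneous_binomials n)"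
    using toric_binomial_homogeneous ideal_generated_base by blast
qed

text \<open>Both generating sets of the theorem are the sets introduced above.\<close>

theorem mainTheorem2:
  fixes \<Sigma> :: "(real^'r) set set" and n :: "'j::finite \<Rightarrow> int^'r"
  assumes "complete_fan \<Sigma>" and "ray_generators \<Sigma> n"
  shows "{f. phi n f = 0} =
           ideal_generated {mono2 D E - mono2 E D | D E. deg_class n D = deg_class n E}
       \<and> (\<forall>Xi :: (real^'r) set \<Rightarrow> (int^'r) set.
            (\<forall>\<Gamma>. chamber n \<Gamma> \<longrightarrow> semigroup_generators (Xi \<Gamma>) \<Gamma>) \<longrightarrow>
            {f. phi n f = 0} =
              ideal_generated {mono2 (Dplus n m) (Dminus n m) - mono2 (Dminus n m) (Dplus n m)
                               | m. \<exists>\<Gamma>. chamber n \<Gamma> \<and> m \<in> Xi \<Gamma>})"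
proof -
  have nonzero: "\<And>j. n j \<noteq> 0"
    using assms(2) unfolding ray_generators_def primitive_def by blast
  have homogeneous: "{mono2 D E - mono2 E D | D E. deg_class n D = deg_class n E} = homogeneous_binomials n"
    unfolding homogeneous_binomials_def binom_def ..
  have toric: "{mono2 (Dplus n m) (Dminus n m) - mono2 (Dminus n m) (Dplus n m) | m. \<exists>\<Gamma>. chamber n \<Gamma> \<and> m \<in> Xi \<Gamma>}
      = {toric_binomial n m | m. \<exists>\<Gamma>. chamber n \<Gamma> \<and> m \<in> Xi \<Gamma>}" for Xi :: "(real^'r) set \<Rightarrow> (int^'r) set"
    unfolding toric_binomial_def binom_def ..
  show ?thesis
    unfolding homogeneous toric
  proof (intro conjI allI impI)
    show "{f. phi n f = 0} = ideal_generated (homogeneous_binomials n)"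
      by (rule kernel_eq_homogeneous_ideal)
  next
    fix Xi :: "(real^'r) set \<Rightarrow> (int^'r) set"
    assume "\<forall>\<Gamma>. chamber n \<Gamma> \<longrightarrow> semigroup_generators (Xi \<Gamma>) \<Gamma>"
    then show "{f. phi n f = 0} = ideal_generated {toric_binomial n m | m. \<exists>\<Gamma>. chamber n \<Gamma> \<and> m \<in> Xi \<Gamma>}"
      by (rule kernel_eq_generator_ideal[OF nonzero])
  qed
qed

end
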